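(* Let $\mathscr C$ be a class of graphs with sub-exponential expansion. Then for every integer $p\ge 2$ there exists an integer $g_p$ such that every graph $G\in\mathscr C$ with $\mathrm{girth}(G)\ge g_p$ is $p$-path degenerate.
   Context: Graphs are finite and simple; the girth of a graph is the length of a shortest cycle ($+\infty$ for a forest). A strict ear of a graph $G$ is a path of $G$ whose internal vertices all have degree $2$ in $G$ and whose two endpoints are distinct. For an integer $p\ge1$, a $p$-reduction of $G$ is the deletion of either an isolated vertex, or a vertex of degree $1$, or the internal vertices of a strict ear of $G$ of length at least $p$. A graph is $p$-path degenerate if it can be reduced to the empty graph (no vertices) by a sequence of $p$-reductions. For a half-integer $r\ge0$ ($r\in\frac12\mathbb N$), a graph $H$ is a shallow minor of $G$ at depth $r$ if to every $v\in V(H)$ one can associate a rooted tree $(T_v,r_v)$ such that the $T_v$ are vertex-disjoint subgraphs of $G$, each $T_v$ has radius at most $\lceil r\rceil$ (every path of $T_v$ starting at $r_v$ has length at most $\lceil r\rceil$), and for every edge $uv\in E(H)$ there is an edge $e$ of $G$ between $T_u$ and $T_v$ such that the path between $r_u$ and $r_v$ in $T_u\cup T_v\cup\{e\}$ has length at most $2r+1$. $\nabla_r(G)$ is the maximum of $|E(H)|/|V(H)|$ over nonempty shallow minors $H$ of $G$ at depth $r$. The expansion of a class $\mathscr C$ is $\mathrm{Exp}_{\mathscr C}(r)=\sup\{\nabla_r(G):G\in\mathscr C\}$ for $r\in\frac12\mathbb N$. The class has sub-exponential expansion if $\mathrm{Exp}_{\mathscr C}(r)=2^{o(r)}$ (in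 particular it is finite for every $r$). *)

theory Defs
  imports Complex_Main "HOL-Library.Extended_Nat"
begin

type_synonym 'a graph = "'a set \<times> 'a set set"

definition wf_graph :: "'a graph \<Rightarrow> bool" where
  "wf_graph G \<longleftrightarrow> finite (fst G) \<and>
     (\<forall>e\<in>snd G. \<exists>x y. x \<in> fst G \<and> y \<in> fst G \<and> x \<noteq> y \<and> e = {x, y})"

definition degree :: "'a graph \<Rightarrow> 'a \<Rightarrow> nat" where
  "degree G v = card {e \<in> snd G. v \<in> e}"

text \<open>A path of G given by its list of (distinct) vertices; its length is length xs - 1.\<close>
definition is_path :: "'a graph \<Rightarrow> 'a list \<Rightarrow> bool" where
  "is_path G xs \<longleftrightarrow> xs \<noteq> [] \<and> distinct xs \<and> set xs \<subseteq> fst G \<and>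
     (\<forall>i. Suc i < length xs \<longrightarrow> {xs ! i, xs ! Suc i} \<in> snd G)"

definition is_cycle :: "'a graph \<Rightarrow> 'a list \<Rightarrow> bool" where
  "is_cycle G xs \<longleftrightarrow> length xs \<ge> 3 \<and> is_path G xs \<and> {last xs, hd xs} \<in> snd G"

definition girth :: "'a graph \<Rightarrow> enat" where
  "girth G = (if \<exists>xs. is_cycle G xs
              then enat (LEAST n. \<exists>xs. is_cycle G xs \<and> length xs = n) else \<infinity>)"

definition subgraph :: "'a graph \<Rightarrow> 'a graph \<Rightarrow> bool" where
  "subgraph T G \<longleftrightarrow> wf_graph T \<and> fst T \<subseteq> fst G \<and> snd T \<subseteq> snd G"

definition connected_graph :: "'a graph \<Rightarrow> bool" where
  "connected_graph T \<longleftrightarrow>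
     (\<forall>x\<in>fst T. \<forall>y\<in>fst T. \<exists>xs. is_path T xs \<and> hd xs = x \<and> last xs = y)"

definition is_tree :: "'a graph \<Rightarrow> bool" where
  "is_tree T \<longleftrightarrow> fst T \<noteq> {} \<and> connected_graph T \<and> \<not> (\<exists>xs. is_cycle T xs)"

text \<open>Shallow minor at depth r = k/2 (k :: nat encodes the half-integer r).
  Each vertex v of H is identified with the root r_v of its tree T v, so V(H) \<subseteq> V(G);
  ceil r = (k+1) div 2 and 2r+1 = k+1.\<close>
definition shallow_minor :: "nat \<Rightarrow> 'a graph \<Rightarrow> 'a graph \<Rightarrow> bool" where
  "shallow_minor k G H \<longleftrightarrow> wf_graph H \<and> fst H \<subseteq> fst G \<and>
    (\<exists>T :: 'a \<Rightarrow> 'a graph.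
      (\<forall>v\<in>fst H. subgraph (T v) G \<and> is_tree (T v) \<and> v \<in> fst (T v) \<and>
          (\<forall>xs. is_path (T v) xs \<and> hd xs = v \<longrightarrow> length xs - 1 \<le> (k + 1) div 2)) \<and>
      (\<forall>u\<in>fst H. \<forall>v\<in>fst H. u \<noteq> v \<longrightarrow> fst (T u) \<inter> fst (T v) = {}) \<and>
      (\<forall>u v. {u, v} \<in> snd H \<longrightarrow>
         (\<exists>x y. x \<in> fst (T u) \<and> y \<in> fst (T v) \<and> {x, y} \<in> snd G \<and>
            (\<exists>xs. is_path (fst (T u) \<union> fst (T v), snd (T u) \<union> snd (T v) \<union> {{x, y}}) xs
                  \<and> hd xs = u \<and> last xs = v \<and> length xs - 1 \<le> k + 1))))"

text \<open>nabla k G = \<nabla>_{k/2}(G): maximum of |E(H)|/|V(H)| over nonempty shallow minors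
  (0 is inserted only to make the value defined for the empty graph; all ratios are \<ge> 0).\<close>
definition nabla :: "nat \<Rightarrow> 'a graph \<Rightarrow> real" where
  "nabla k G = Sup (insert 0 {real (card (snd H)) / real (card (fst H)) | H.
                     shallow_minor k G H \<and> fst H \<noteq> {}})"

text \<open>Sub-exponential expansion: Exp(r) finite for every r and Exp(r) = 2^{o(r)},
  i.e. for every eps > 0, eventually Exp(r) \<le> 2^(eps r); here r = k/2.\<close>
definition subexp_expansion :: "'a graph set \<Rightarrow> bool" where
  "subexp_expansion C \<longleftrightarrow>
     (\<forall>k. \<exists>B. \<forall>G\<in>C. nabla k G \<le> B) \<and>
     (\<forall>\<epsilon>>0. \<exists>N. \<forall>k\<ge>N. \<forall>G\<in>C. nabla k G \<le> 2 powr (\<epsilon> * (real k / 2)))"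

definition p_reduction :: "nat \<Rightarrow> 'a graph \<Rightarrow> 'a graph \<Rightarrow> bool" where
  "p_reduction p G G' \<longleftrightarrow>
     (\<exists>v\<in>fst G. degree G v = 0 \<and> G' = (fst G - {v}, snd G)) \<or>
     (\<exists>v\<in>fst G. degree G v = 1 \<and> G' = (fst G - {v}, {e \<in> snd G. v \<notin> e})) \<or>
     (\<exists>xs. is_path G xs \<and> hd xs \<noteq> last xs \<and> length xs - 1 \<ge> p \<and>
        (\<forall>x\<in>set (butlast (tl xs)). degree G x = 2) \<and>
        G' = (fst G - set (butlast (tl xs)), {e \<in> snd G. e \<inter> set (butlast (tl xs)) = {}}))"

inductive path_degenerate :: "nat \<Rightarrow> 'a graph \<Rightarrow> bool" for p :: nat where
  empty: "path_degenerate p ({}, {})"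
| step: "p_reduction p G G' \<Longrightarrow> path_degenerate p G' \<Longrightarrow> path_degenerate p G"

end

theory Submission
  imports Defs "HOL-Library.Product_Lexorder"
begin

text \<open>If \<open>G\<close> is not \<open>p\<close>-path degenerate, greedy reduction gets stuck at a nonempty induced
  subgraph \<open>H\<close> admitting no \<open>p\<close>-reduction: \<open>H\<close> has minimum degree at least 2 and every path with
  \<open>p\<close> edges has an inner vertex of degree at least 3. Below the girth, paths from a vertex
  therefore branch at least once every \<open>p\<close> steps, and there are at least \<open>2^(r div p)\<close> paths of
  length \<open>r\<close> starting at any vertex of \<open>H\<close>.

  Now take a maximal set \<open>S\<close> of vertices of \<open>H\<close> at pairwise distance more than \<open>2R\<close> and split
  \<open>H\<close> into breadth-first trees of radius at most \<open>2R\<close> around them. If the girth exceeds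
  \<open>8R + 2\<close>, the paths of length \<open>R + 1\<close> from a centre leave its tree through pairwise distinct
  edges, and two trees are joined by at most one edge. Contracting the trees gives a shallow minor
  at depth \<open>2R\<close> with at least \<open>2^((R + 1) div p) / 2\<close> edges per vertex, which for large \<open>R\<close>
  exceeds the sub-exponential bound on the expansion.\<close>

section \<open>Walks, paths and cycles\<close>

fun walk :: "'a set set \<Rightarrow> 'a list \<Rightarrow> bool" where
  "walk F [] = True"
| "walk F [x] = True"
| "walk F (x # y # xs) \<longleftrightarrow> {x, y} \<in> F \<and> walk F (y # xs)"

lemma walk_nth: "walk F xs \<longleftrightarrow> (\<forall>i. Suc i < length xs \<longrightarrow> {xs ! i, xs ! Suc i} \<in> F)"
proof (induction F xs rule: walk.induct)
  case (3 F x y xs)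
  have "(\<forall>i. Suc i < length (x # y # xs) \<longrightarrow> {(x # y # xs) ! i, (x # y # xs) ! Suc i} \<in> F)
      \<longleftrightarrow> {x, y} \<in> F \<and> (\<forall>i. Suc i < length (y # xs) \<longrightarrow> {(y # xs) ! i, (y # xs) ! Suc i} \<in> F)"
    by (auto simp: nth_Cons split: nat.splits)
  with 3 show ?case by simp
qed auto

lemma is_path_iff_walk:
  "is_path G xs \<longleftrightarrow> xs \<noteq> [] \<and> distinct xs \<and> set xs \<subseteq> fst G \<and> walk (snd G) xs"
  unfolding is_path_def walk_nth by simp

lemma walk_append:
  "walk F (xs @ ys) \<longleftrightarrow> walk F xs \<and> walk F ys \<and> (xs \<noteq> [] \<and> ys \<noteq> [] \<longrightarrow> {last xs, hd ys} \<in> F)"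
proof (induction xs rule: walk.induct)
  case (2 F x)
  then show ?case by (cases ys) auto
qed auto

lemma walk_Cons: "walk F (x # xs) \<longleftrightarrow> walk F xs \<and> (xs \<noteq> [] \<longrightarrow> {x, hd xs} \<in> F)"
  by (cases xs) auto

lemma walk_rev [simp]: "walk F (rev xs) \<longleftrightarrow> walk F xs"
  by (induction F xs rule: walk.induct) (auto simp: walk_append insert_commute)

lemma walk_mono: "walk F xs \<Longrightarrow> F \<subseteq> F' \<Longrightarrow> walk F' xs"
  by (induction F xs rule: walk.induct) auto

lemma walk_take: "walk F xs \<Longrightarrow> walk F (take n xs)"
  and walk_drop: "walk F xs \<Longrightarrow> walk F (drop n xs)"
  using walk_append[of F "take n xs" "drop n xs"] by simp_all

lemma walk_join:
  "walk F xs \<Longrightarrow> walk F ys \<Longrightarrow> last xs = hd ys \<Longrightarrow> walk F (xs @ tl ys)"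
  by (cases ys) (auto simp: walk_append walk_Cons)

lemma last_append_tl: "ys \<noteq> [] \<Longrightarrow> xs \<noteq> [] \<Longrightarrow> last xs = hd ys \<Longrightarrow> last (xs @ tl ys) = last ys"
  by (cases ys) auto

lemma walk_avoiding_vertex: "walk F xs \<Longrightarrow> a \<notin> set xs \<Longrightarrow> walk (F - {{a, b}}) xs"
  unfolding walk_nth by (auto simp: doubleton_eq_iff)

lemma is_path_drop: "is_path G xs \<Longrightarrow> n < length xs \<Longrightarrow> is_path G (drop n xs)"
  unfolding is_path_iff_walk using walk_drop set_drop_subset by fastforce

lemma is_path_take: "is_path G xs \<Longrightarrow> 0 < n \<Longrightarrow> is_path G (take n xs)"
  unfolding is_path_iff_walk using walk_take set_take_subset by fastforce

lemma walk_shortcut: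
  assumes "walk F xs" "xs \<noteq> []"
  obtains ys where "walk F ys" "distinct ys" "ys \<noteq> []" "hd ys = hd xs" "last ys = last xs"
    "set ys \<subseteq> set xs" "length ys \<le> length xs"
  using assms
proof (induction "length xs" arbitrary: xs rule: less_induct)
  case less
  show ?case
  proof (cases "distinct xs")
    case True
    with less show ?thesis by blast
  next
    case False
    then obtain as y bs cs where xs: "xs = as @ [y] @ bs @ [y] @ cs"
      using not_distinct_decomp by blast
    define xs' where "xs' = as @ [y] @ cs"
    have "walk F xs'"
      using less(3) unfolding xs xs'_def by (auto simp: walk_append walk_Cons)
    moreover have "length xs' < length xs" "xs' \<noteq> []"
      unfolding xs xs'_def by simp_all
    moreover have "hd xs' = hd xs" "last xs' = last xs" "set xs' \<subseteq> set xs"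
      unfolding xs xs'_def by (cases as; auto)+
    ultimately show ?thesis
      using less(1)[of xs'] less(2) by (metis order.trans less_imp_le)
  qed
qed

lemma cycle_of_walk_avoiding_edge:
  assumes "a \<noteq> b" "{a, b} \<in> snd G" "walk (snd G - {{a, b}}) w" "w \<noteq> []" "hd w = a" "last w = b"
    "set w \<subseteq> fst G"
  obtains cyc where "is_cycle G cyc" "length cyc \<le> length w"
proof -
  obtain ys where ys: "walk (snd G - {{a, b}}) ys" "distinct ys" "ys \<noteq> []" "hd ys = a" "last ys = b"
    "set ys \<subseteq> set w" "length ys \<le> length w"
    using walk_shortcut[OF assms(3,4)] assms(5,6) by metis
  have "length ys \<ge> 3"
  proof (cases ys rule: remdups_adj.cases)
    case (3 x y zs)
    with ys(1,4,5) assms(1) show ?thesis by (cases zs) auto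
  qed (use ys(3-5) assms(1) in auto)
  moreover have "is_path G ys"
    unfolding is_path_iff_walk using ys assms(7) walk_mono[OF ys(1), of "snd G"] by auto
  moreover have "{last ys, hd ys} \<in> snd G"
    using ys assms(2) by (simp add: insert_commute)
  ultimately show ?thesis
    using that ys(7) unfolding is_cycle_def by blast
qed

lemma distinct_eq_if_same_last_and_prefix:
  assumes "distinct xs" "distinct ys" "xs \<noteq> []" "ys \<noteq> []" "last xs = last ys"
    and "length xs \<le> length ys" "\<forall>j<length xs. xs ! j = ys ! j"
  shows "xs = ys"
proof -
  have lengths: "length xs - 1 < length ys" "length ys - 1 < length ys"
    using assms(3,4,6) by (simp_all add: less_diff_conv2 Suc_le_eq)
  have "ys ! (length xs - 1) = last xs"
    using assms(3,7) by (simp add: last_conv_nth)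
  also have "\<dots> = ys ! (length ys - 1)"
    using assms(4,5) by (simp add: last_conv_nth)
  finally have "length xs - 1 = length ys - 1"
    using assms(2) lengths nth_eq_iff_index_eq by metis
  with assms(3,4) have "length xs = length ys"
    by (metis One_nat_def Suc_pred length_greater_0_conv)
  with assms(7) show ?thesis by (simp add: nth_equalityI)
qed

lemma paths_first_divergence:
  assumes P: "is_path G P" and Q: "is_path G Q" and "hd P = hd Q" "last P = last Q" "P \<noteq> Q"
  obtains i where "Suc i < length P" "Suc i < length Q" "P ! i = Q ! i" "P ! Suc i \<noteq> Q ! Suc i"
proof -
  have dist: "distinct P" "distinct Q" "P \<noteq> []" "Q \<noteq> []"
    using P Q by (auto simp: is_path_def)
  define diff where "diff j \<longleftrightarrow> j < length P \<and> j < length Q \<and> P ! j \<noteq> Q ! j" for j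
  have "\<exists>j. diff j"
  proof (rule ccontr)
    assume "\<nexists>j. diff j"
    then have "\<forall>j<min (length P) (length Q). P ! j = Q ! j"
      unfolding diff_def by simp
    then show False
      using distinct_eq_if_same_last_and_prefix[OF dist(1-4) assms(4)]
        distinct_eq_if_same_last_and_prefix[OF dist(2,1,4,3) assms(4)[symmetric]] assms(5)
      by (metis min.absorb1 min.absorb2 linorder_le_cases)
  qed
  define j where "j = (LEAST j. diff j)"
  have j: "diff j" and j_min: "\<And>i. i < j \<Longrightarrow> \<not> diff i"
    unfolding j_def using LeastI_ex[OF \<open>\<exists>j. diff j\<close>] not_less_Least by blast+
  have "j \<noteq> 0"
    using j assms(3) dist by (cases j) (auto simp: diff_def hd_conv_nth)
  then obtain i where "j = Suc i" by (cases j) auto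
  with j j_min[of i] show ?thesis
    using that unfolding diff_def by auto
qed

text \<open>The two paths part at a vertex \<open>a\<close> towards distinct vertices \<open>b\<close> and \<open>b'\<close>. Their
  remainders avoid \<open>a\<close>, so together with the edge \<open>b'a\<close> they form a walk from \<open>b\<close> to \<open>a\<close>
  that avoids the edge \<open>ab\<close>.\<close>

lemma cycle_of_distinct_paths:
  assumes P: "is_path G P" and Q: "is_path G Q" and "hd P = hd Q" "last P = last Q" "P \<noteq> Q"
  obtains cyc where "is_cycle G cyc" "length cyc + 2 \<le> length P + length Q"
proof -
  obtain i where i: "Suc i < length P" "Suc i < length Q" "P ! i = Q ! i" "P ! Suc i \<noteq> Q ! Suc i"
    using paths_first_divergence[OF assms] .
  have P': "distinct P" "set P \<subseteq> fst G" "walk (snd G) P" and Q': "distinct Q" "set Q \<subseteq> fst G" "walk (snd G) Q"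
    using P Q by (auto simp: is_path_iff_walk)
  define a where "a = P ! i"
  define b where "b = P ! Suc i"
  define A where "A = drop (Suc i) P"
  define B where "B = rev (drop (Suc i) Q)"
  have "a \<notin> set A"
    using i(1) P'(1) unfolding a_def A_def by (auto simp: in_set_conv_nth nth_eq_iff_index_eq)
  moreover have "a \<notin> set B"
    using i(2) Q'(1) unfolding a_def i(3) B_def by (auto simp: in_set_conv_nth nth_eq_iff_index_eq)
  moreover have "walk (snd G) A" "walk (snd G) B"
    unfolding A_def B_def using P'(3) Q'(3) by (simp_all add: walk_drop)
  ultimately have "walk (snd G - {{a, b}}) A" "walk (snd G - {{a, b}}) B"
    by (simp_all add: walk_avoiding_vertex)
  moreover have "{a, Q ! Suc i} \<in> snd G - {{a, b}}" "{a, b} \<in> snd G" "a \<noteq> b"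
    using i P'(1,3) Q'(3) unfolding walk_nth a_def b_def
    by (auto simp: doubleton_eq_iff nth_eq_iff_index_eq)
  moreover have "A \<noteq> []" "B \<noteq> []" "hd A = b" "last A = hd B" "last B = Q ! Suc i"
    using i assms(4) unfolding A_def B_def b_def by (auto simp: hd_drop_conv_nth last_rev hd_rev)
  ultimately have "walk (snd G - {{a, b}}) (A @ tl B)" "last (A @ tl B) = Q ! Suc i"
    using walk_join[of _ A B] last_append_tl[of B A] by simp_all
  then have "walk (snd G - {{a, b}}) ((A @ tl B) @ [a])"
    using \<open>{a, Q ! Suc i} \<in> snd G - {{a, b}}\<close> walk_append[of _ "A @ tl B" "[a]"]
    by (simp add: insert_commute)
  moreover have "set (A @ tl B @ [a]) \<subseteq> fst G"
    using P'(2) Q'(2) i unfolding A_def B_def a_def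
    by (auto dest!: in_set_dropD list.set_sel(2)[rotated] simp: set_drop_subset)
  ultimately obtain cyc where "is_cycle G cyc" "length cyc \<le> length (A @ tl B @ [a])"
    using cycle_of_walk_avoiding_edge[of b a G "(A @ tl B) @ [a]"] \<open>a \<noteq> b\<close> \<open>{a, b} \<in> snd G\<close>
      \<open>hd A = b\<close> \<open>A \<noteq> []\<close> by (auto simp: insert_commute)
  moreover have "length (A @ tl B @ [a]) + 2 \<le> length P + length Q"
    using i unfolding A_def B_def by simp
  ultimately show ?thesis using that by simp
qed

lemma cycle_two_neighbours:
  assumes "is_cycle G cyc" "x \<in> set cyc"
  obtains a b where "a \<noteq> b" "a \<in> set cyc" "b \<in> set cyc" "{x, a} \<in> snd G" "{x, b} \<in> snd G"
proof -
  define n where "n = length cyc"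
  have n: "n \<ge> 3" "distinct cyc" "walk (snd G) cyc" "{cyc ! (n - 1), cyc ! 0} \<in> snd G"
    using assms(1) unfolding is_cycle_def is_path_iff_walk n_def
    by (auto simp: last_conv_nth hd_conv_nth)
  have edge: "{cyc ! j, cyc ! Suc j} \<in> snd G" if "Suc j < n" for j
    using n(3) that unfolding walk_nth n_def by simp
  have neq: "cyc ! j \<noteq> cyc ! k" if "j < n" "k < n" "j \<noteq> k" for j k
    using n(2) that unfolding n_def by (simp add: nth_eq_iff_index_eq)
  have mem: "cyc ! j \<in> set cyc" if "j < n" for j
    using that unfolding n_def by simp
  obtain i where i: "i < n" "x = cyc ! i"
    using assms(2) unfolding n_def by (metis in_set_conv_nth)
  consider "i = 0" | "i = n - 1" | "0 < i" "i < n - 1"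
    using i(1) n(1) by linarith
  then show ?thesis
  proof cases
    case 1
    then show ?thesis
      using that[of "cyc ! 1" "cyc ! (n - 1)"] i edge[of 0] n neq mem by (simp add: insert_commute)
  next
    case 2
    then show ?thesis
      using that[of "cyc ! (n - 2)" "cyc ! 0"] i edge[of "n - 2"] n neq mem
      by (simp add: insert_commute numeral_2_eq_2 Suc_diff_Suc)
  next
    case 3
    then show ?thesis
      using that[of "cyc ! (i - 1)" "cyc ! Suc i"] i edge[of i] edge[of "i - 1"] n neq mem
      by (simp add: insert_commute)
  qed
qed

section \<open>Reductions\<close>

definition induced_subgraph :: "'a graph \<Rightarrow> 'a set \<Rightarrow> 'a graph" where
  "induced_subgraph G U = (U, {e \<in> snd G. e \<subseteq> U})"

definition p_irreducible :: "nat \<Rightarrow> 'a graph \<Rightarrow> bool" where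
  "p_irreducible p G \<longleftrightarrow> (\<nexists>G'. p_reduction p G G')"

lemma wf_graph_finite_edges: "wf_graph G \<Longrightarrow> finite (snd G)"
  unfolding wf_graph_def by (auto intro: finite_subset[of _ "Pow (fst G)"])

lemma wf_graph_delete: "wf_graph G \<Longrightarrow> wf_graph (fst G - X, {e \<in> snd G. e \<inter> X = {}})"
  unfolding wf_graph_def by fastforce

lemma wf_graph_induced_subgraph:
  assumes "wf_graph G" "U \<subseteq> fst G"
  shows "wf_graph (induced_subgraph G U)"
  unfolding wf_graph_def induced_subgraph_def
proof (intro conjI ballI)
  show "finite (fst (U, {e \<in> snd G. e \<subseteq> U}))"
    using assms finite_subset by (auto simp: wf_graph_def)
  fix e assume "e \<in> snd (U, {e \<in> snd G. e \<subseteq> U})"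
  then obtain x y where "e = {x, y}" "x \<noteq> y" "e \<subseteq> U"
    using assms(1) by (auto simp: wf_graph_def)
  then show "\<exists>x y. x \<in> fst (U, {e \<in> snd G. e \<subseteq> U}) \<and> y \<in> fst (U, {e \<in> snd G. e \<subseteq> U}) \<and> x \<noteq> y \<and> e = {x, y}"
    by auto
qed

lemma p_reduction_deletes:
  assumes "wf_graph G" "p \<ge> 2" "p_reduction p G G'"
  obtains X where "X \<noteq> {}" "X \<subseteq> fst G" "G' = (fst G - X, {e \<in> snd G. e \<inter> X = {}})"
  using assms(3) unfolding p_reduction_def
proof (elim disjE bexE exE conjE)
  fix v assume v: "v \<in> fst G" "degree G v = 0" "G' = (fst G - {v}, snd G)"
  then have "{e \<in> snd G. v \<in> e} = {}"
    using wf_graph_finite_edges[OF assms(1)] unfolding degree_def by simp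
  with v that show ?thesis by (intro that[of "{v}"]) auto
next
  fix xs assume xs: "is_path G xs" "p \<le> length xs - 1"
    "G' = (fst G - set (butlast (tl xs)), {e \<in> snd G. e \<inter> set (butlast (tl xs)) = {}})"
  have "butlast (tl xs) \<noteq> []"
    using xs(2) assms(2) by (cases xs; cases "tl xs") auto
  moreover have "set (butlast (tl xs)) \<subseteq> fst G"
    using xs(1) unfolding is_path_def by (auto dest: in_set_butlastD list.set_sel(2)[rotated])
  ultimately show ?thesis
    using xs(3) that by blast
qed (use that in auto)

lemma p_reduction_shrinks:
  assumes "wf_graph G" "p \<ge> 2" "p_reduction p G G'"
  shows "wf_graph G'" "fst G' \<subset> fst G"
    and "U \<subseteq> fst G' \<Longrightarrow> induced_subgraph G' U = induced_subgraph G U"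
proof -
  obtain X where X: "X \<noteq> {}" "X \<subseteq> fst G" "G' = (fst G - X, {e \<in> snd G. e \<inter> X = {}})"
    by (rule p_reduction_deletes[OF assms])
  then show "wf_graph G'" "fst G' \<subset> fst G"
    using wf_graph_delete[OF assms(1)] by auto
  show "U \<subseteq> fst G' \<Longrightarrow> induced_subgraph G' U = induced_subgraph G U"
    using X(3) unfolding induced_subgraph_def by auto
qed

lemma path_degenerate_or_irreducible_subgraph_if_irreducible:
  assumes "wf_graph G" "p_irreducible p G"
  shows "path_degenerate p G \<or> (\<exists>U. U \<subseteq> fst G \<and> U \<noteq> {} \<and> p_irreducible p (induced_subgraph G U))"
proof (cases "fst G = {}")
  case True
  moreover have "snd G = {}"
    using assms(1) True by (auto simp: wf_graph_def)
  ultimately have "G = ({}, {})"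
    by (simp add: prod_eq_iff)
  then show ?thesis
    using path_degenerate.empty by simp
next
  case False
  have "{e \<in> snd G. e \<subseteq> fst G} = snd G"
    using assms(1) by (auto simp: wf_graph_def)
  then have "induced_subgraph G (fst G) = G"
    by (simp add: induced_subgraph_def)
  with False assms(2) show ?thesis
    by (intro disjI2 exI[of _ "fst G"]) simp
qed

lemma path_degenerate_or_irreducible_subgraph:
  assumes "wf_graph G" "p \<ge> 2"
  shows "path_degenerate p G \<or>
    (\<exists>U. U \<subseteq> fst G \<and> U \<noteq> {} \<and> p_irreducible p (induced_subgraph G U))"
  using assms
proof (induction "card (fst G)" arbitrary: G rule: less_induct)
  case less
  show ?case
  proof (cases "p_irreducible p G")
    case False
    then obtain G' where step: "p_reduction p G G'"
      unfolding p_irreducible_def by blast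
    note G' = p_reduction_shrinks[OF less(2,3) step]
    have "card (fst G') < card (fst G)"
      using G'(2) less(2) by (simp add: psubset_card_mono wf_graph_def)
    then consider "path_degenerate p G'"
      | U where "U \<subseteq> fst G'" "U \<noteq> {}" "p_irreducible p (induced_subgraph G' U)"
      using less(1)[OF _ G'(1) less(3)] by blast
    then show ?thesis
    proof cases
      case 1
      then show ?thesis
        using step path_degenerate.step by blast
    next
      case (2 U)
      then show ?thesis
        using G'(2,3) by (intro disjI2 exI[of _ U]) auto
    qed
  qed (rule path_degenerate_or_irreducible_subgraph_if_irreducible[OF less(2)])
qed

locale fin_graph =
  fixes V :: "'a set" and E :: "'a set set"
  assumes wf: "wf_graph (V, E)"
begin

lemma finite_V: "finite V"
  using wf unfolding wf_graph_def by simp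

lemma finite_E: "finite E"
  using wf_graph_finite_edges[OF wf] by simp

lemma edge_neq: "{x, y} \<in> E \<Longrightarrow> x \<noteq> y"
  using wf unfolding wf_graph_def by (auto simp: doubleton_eq_iff)

lemma edge_vertices: "{x, y} \<in> E \<Longrightarrow> x \<in> V \<and> y \<in> V"
  using wf unfolding wf_graph_def by (auto simp: doubleton_eq_iff)

lemma edge_is_doubleton: "e \<in> E \<Longrightarrow> \<exists>x y. e = {x, y}"
  using wf unfolding wf_graph_def by (metis snd_conv)

definition reach :: "nat \<Rightarrow> 'a \<Rightarrow> 'a \<Rightarrow> bool" where
  "reach n u v \<longleftrightarrow> (\<exists>w. walk E w \<and> set w \<subseteq> V \<and> length w = Suc n \<and> hd w = u \<and> last w = v)"

definition gdist :: "'a \<Rightarrow> 'a \<Rightarrow> nat" where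
  "gdist u v = (LEAST n. reach n u v)"

lemma reach_0: "u \<in> V \<Longrightarrow> reach 0 u u"
  unfolding reach_def by (intro exI[of _ "[u]"]) auto

lemma reach_0D: "reach 0 u v \<Longrightarrow> u = v"
  unfolding reach_def by (auto simp: length_Suc_conv)

lemma reach_vertices: "reach n u v \<Longrightarrow> u \<in> V \<and> v \<in> V"
  unfolding reach_def by (auto intro!: hd_in_set last_in_set)

lemma reach_Suc_iff: "reach (Suc n) u w \<longleftrightarrow> (\<exists>v. reach n u v \<and> {v, w} \<in> E)"
proof
  assume "reach (Suc n) u w"
  then obtain ws where ws: "walk E ws" "set ws \<subseteq> V" "length ws = Suc (Suc n)" "hd ws = u" "last ws = w"
    unfolding reach_def by blast
  define ws' where "ws' = butlast ws"
  have ws_eq: "ws = ws' @ [w]" and "ws' \<noteq> []"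
    using ws append_butlast_last_id[of ws] unfolding ws'_def by (auto simp: length_Suc_conv)
  then have "walk E ws'" "{last ws', w} \<in> E" "hd ws' = u" "length ws' = Suc n" "set ws' \<subseteq> V"
    using ws walk_append[of E ws' "[w]"] by auto
  then show "\<exists>v. reach n u v \<and> {v, w} \<in> E"
    unfolding reach_def by blast
next
  assume "\<exists>v. reach n u v \<and> {v, w} \<in> E"
  then obtain v ws where "{v, w} \<in> E" "walk E ws" "set ws \<subseteq> V" "length ws = Suc n" "hd ws = u" "last ws = v"
    unfolding reach_def by blast
  moreover from this have "ws \<noteq> []" by auto
  ultimately show "reach (Suc n) u w"
    unfolding reach_def using edge_vertices
    by (intro exI[of _ "ws @ [w]"]) (auto simp: walk_append)
qed

lemma reach_sym: "reach n u v \<Longrightarrow> reach n v u"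
  unfolding reach_def by (metis hd_rev last_rev set_rev length_rev walk_rev)

lemma reach_trans: "reach a u v \<Longrightarrow> reach b v w \<Longrightarrow> reach (a + b) u w"
  by (induction b arbitrary: w) (auto dest: reach_0D simp: reach_Suc_iff)

lemma gdist_le: "reach n u v \<Longrightarrow> gdist u v \<le> n"
  unfolding gdist_def by (rule Least_le)

lemma reach_gdist: "reach n u v \<Longrightarrow> reach (gdist u v) u v"
  unfolding gdist_def by (rule LeastI)

lemma gdist_predecessor:
  assumes "reach n u w" "gdist u w > 0"
  obtains v where "{v, w} \<in> E" "reach (gdist u w - 1) u v" "gdist u v = gdist u w - 1"
proof -
  obtain k where k: "gdist u w = Suc k"
    using assms(2) by (cases "gdist u w") auto
  then obtain v where v: "reach k u v" "{v, w} \<in> E"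
    using reach_gdist[OF assms(1)] reach_Suc_iff by metis
  have "gdist u w \<le> Suc (gdist u v)"
    using gdist_le reach_Suc_iff reach_gdist[OF v(1)] v(2) by blast
  with gdist_le[OF v(1)] k show ?thesis
    using that v by simp
qed

lemma reach_path:
  assumes "reach n u v"
  obtains P where "is_path (V, E) P" "hd P = u" "last P = v" "length P \<le> Suc n"
proof -
  obtain ws where ws: "walk E ws" "set ws \<subseteq> V" "length ws = Suc n" "hd ws = u" "last ws = v"
    using assms unfolding reach_def by blast
  then have "ws \<noteq> []" by auto
  with ws show ?thesis
    using walk_shortcut[OF ws(1)] that unfolding is_path_iff_walk by (metis fst_conv order.trans snd_conv)
qed

lemma path_reach: "is_path (V, E) P \<Longrightarrow> reach (length P - 1) (hd P) (last P)"
  unfolding reach_def is_path_iff_walk by (intro exI[of _ P]) auto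

definition paths_from :: "'a \<Rightarrow> nat \<Rightarrow> 'a list set" where
  "paths_from c r = {xs. is_path (V, E) xs \<and> hd xs = c \<and> length xs = Suc r}"

lemma finite_paths_from: "finite (paths_from c r)"
proof -
  have "paths_from c r \<subseteq> {xs. set xs \<subseteq> V \<and> length xs = Suc r}"
    unfolding paths_from_def is_path_def by auto
  then show ?thesis
    using finite_lists_length_eq[OF finite_V] by (rule finite_subset)
qed

lemma paths_from_0: "c \<in> V \<Longrightarrow> paths_from c 0 = {[c]}"
  unfolding paths_from_def is_path_def by (auto simp: length_Suc_conv)

lemma take_paths_from:
  "xs \<in> paths_from c r \<Longrightarrow> k \<le> r \<Longrightarrow> take (Suc k) xs \<in> paths_from c k"
  unfolding paths_from_def using is_path_take by (fastforce simp: hd_take)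

lemma neighbour_avoiding:
  assumes "card Z < degree (V, E) v" "finite Z"
  obtains y where "{v, y} \<in> E" "y \<notin> Z"
proof -
  have "card ((\<lambda>z. {v, z}) ` Z) < card {e \<in> E. v \<in> e}"
    using assms card_image_le[OF assms(2), of "\<lambda>z. {v, z}"] unfolding degree_def by simp
  then have "\<not> {e \<in> E. v \<in> e} \<subseteq> (\<lambda>z. {v, z}) ` Z"
    using card_mono[OF finite_imageI[OF assms(2)]] by (meson leD)
  then obtain e where e: "e \<in> E" "v \<in> e" "e \<notin> (\<lambda>z. {v, z}) ` Z"
    by blast
  obtain x y where "e = {x, y}"
    using edge_is_doubleton[OF e(1)] by blast
  with e(2) obtain w where "e = {v, w}"
    by blast
  with e show ?thesis
    using that by blast
qed

end

section \<open>Path counting in irreducible graphs\<close>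

locale irreducible_graph = fin_graph +
  fixes p g :: nat
  assumes p_ge_2: "p \<ge> 2"
    and girth_ge: "is_cycle (V, E) cyc \<Longrightarrow> g \<le> length cyc"
    and irreducible: "p_irreducible p (V, E)"
begin

lemma degree_ge_2:
  assumes "v \<in> V"
  shows "degree (V, E) v \<ge> 2"
proof -
  have "\<not> p_reduction p (V, E) (V - {v}, E)" "\<not> p_reduction p (V, E) (V - {v}, {e \<in> E. v \<notin> e})"
    using irreducible unfolding p_irreducible_def by blast+
  then show ?thesis
    using assms unfolding p_reduction_def by fastforce
qed

lemma path_has_branch_vertex:
  assumes "is_path (V, E) xs" "length xs = Suc p"
  obtains k where "0 < k" "k < p" "degree (V, E) (xs ! k) \<ge> 3"
proof -
  have "xs ! 0 \<noteq> xs ! p"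
    using assms p_ge_2 nth_eq_iff_index_eq[of xs 0 p] by (simp add: is_path_def)
  moreover have "xs \<noteq> []"
    using assms(2) by auto
  ultimately have "hd xs \<noteq> last xs"
    using assms(2) by (simp add: hd_conv_nth last_conv_nth)
  moreover have "\<not> p_reduction p (V, E)
      (V - set (butlast (tl xs)), {e \<in> E. e \<inter> set (butlast (tl xs)) = {}})"
    using irreducible unfolding p_irreducible_def by blast
  ultimately have "\<not> (\<forall>x\<in>set (butlast (tl xs)). degree (V, E) x = 2)"
    using assms unfolding p_reduction_def by (intro notI) (simp add: disjI2 exI[of _ xs])
  then obtain k where k: "k < p - 1" "degree (V, E) (xs ! Suc k) \<noteq> 2"
    using assms(2) by (auto simp: in_set_conv_nth nth_butlast nth_tl)
  moreover have "xs ! Suc k \<in> V"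
    using assms k(1) by (auto simp: is_path_def)
  ultimately show ?thesis
    using that[of "Suc k"] degree_ge_2[of "xs ! Suc k"] by simp
qed

text \<open>A repeated vertex would close a cycle shorter than the girth.\<close>

lemma paths_from_snoc:
  assumes xs: "xs \<in> paths_from c r" and "Suc r < g" "{last xs, y} \<in> E"
    and no_backtrack: "r \<ge> 1 \<Longrightarrow> y \<noteq> xs ! (r - 1)"
  shows "xs @ [y] \<in> paths_from c (Suc r)"
proof -
  have P: "is_path (V, E) xs" "hd xs = c" "length xs = Suc r"
    using xs unfolding paths_from_def by auto
  have last_xs: "last xs = xs ! r"
    using P(3) last_conv_nth[of xs] by fastforce
  have "y \<notin> set xs"
  proof
    assume "y \<in> set xs"
    then obtain j where j: "j \<le> r" "xs ! j = y"
      using P(3) by (metis in_set_conv_nth less_Suc_eq_le)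
    moreover have "j \<noteq> r" "j \<noteq> r - 1"
      using j no_backtrack edge_neq[OF assms(3)] last_xs by (cases r; force)+
    ultimately have "j + 2 \<le> r" by linarith
    then have "is_cycle (V, E) (drop j xs)"
      using is_path_drop[OF P(1), of j] P(3) assms(3) j(2)
      by (simp add: is_cycle_def hd_drop_conv_nth)
    then show False
      using girth_ge[of "drop j xs"] P(3) assms(2) by simp
  qed
  then have "is_path (V, E) (xs @ [y])"
    using P(1) assms(3) edge_vertices unfolding is_path_iff_walk by (auto simp: walk_append)
  then show ?thesis
    using P unfolding paths_from_def by (cases xs) auto
qed

lemma paths_from_extend:
  assumes "xs \<in> paths_from c r" "r + m < g"
  obtains ys where "ys \<in> paths_from c (r + m)" "take (Suc r) ys = xs"
  using assms(2) that
proof (induction m arbitrary: thesis)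
  case 0
  with assms(1) show ?case
    unfolding paths_from_def by auto
next
  case (Suc m)
  then obtain ys where ys: "ys \<in> paths_from c (r + m)" "take (Suc r) ys = xs"
    by auto
  then have "last ys \<in> V" "length ys = Suc (r + m)"
    unfolding paths_from_def is_path_def by auto
  moreover have "card {ys ! (r + m - 1)} < degree (V, E) (last ys)"
    using degree_ge_2[OF \<open>last ys \<in> V\<close>] by simp
  ultimately obtain y where "{last ys, y} \<in> E" "y \<noteq> ys ! (r + m - 1)"
    using neighbour_avoiding by blast
  then have "ys @ [y] \<in> paths_from c (Suc (r + m))"
    using paths_from_snoc[OF ys(1)] Suc.prems by simp
  then show ?case
    using Suc.prems ys(2) \<open>length ys = Suc (r + m)\<close> by simp
qed

lemma paths_from_reroute:
  assumes ys: "ys \<in> paths_from c n" and "n < g" "0 < i" "i < n"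
    and y: "{ys ! i, y} \<in> E" "y \<noteq> ys ! (i - 1)" "y \<noteq> ys ! Suc i"
  obtains ys' where "ys' \<in> paths_from c n" "take (Suc i) ys' = take (Suc i) ys" "ys' \<noteq> ys"
proof -
  define pre where "pre = take (Suc i) ys"
  have "length ys = Suc n"
    using ys unfolding paths_from_def by simp
  then have pre: "pre \<in> paths_from c i" "last pre = ys ! i" "length pre = Suc i" "pre ! (i - 1) = ys ! (i - 1)"
    using take_paths_from[OF ys, of i] assms(3,4) unfolding pre_def
    by (simp_all add: take_Suc_conv_app_nth nth_append)
  then have "pre @ [y] \<in> paths_from c (Suc i)"
    using paths_from_snoc[OF pre(1)] y assms(2,4) by simp
  then obtain ys' where ys': "ys' \<in> paths_from c n" "take (Suc (Suc i)) ys' = pre @ [y]"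
    using paths_from_extend[of "pre @ [y]" c "Suc i" "n - Suc i"] assms(2,4) by auto
  have "ys' ! Suc i = y"
    using nth_take[of "Suc i" "Suc (Suc i)" ys'] ys'(2) pre(3) by (simp add: nth_append)
  moreover have "take (Suc i) ys' = pre"
    using arg_cong[OF ys'(2), of "take (Suc i)"] pre(3) by simp
  ultimately show ?thesis
    using that ys'(1) y(3) unfolding pre_def by blast
qed

text \<open>Irreducibility forces a vertex of degree at least three on every stretch of \<open>p\<close> edges,
  so every path can be continued in two different ways within \<open>p\<close> further steps.\<close>

lemma paths_from_branch:
  assumes xs: "xs \<in> paths_from c r" and "r + p < g"
  shows "2 \<le> card {ys \<in> paths_from c (r + p). take (Suc r) ys = xs}"
proof -
  obtain ys where ys: "ys \<in> paths_from c (r + p)" "take (Suc r) ys = xs"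
    using paths_from_extend[OF assms] .
  have P: "is_path (V, E) ys" "length ys = Suc (r + p)"
    using ys unfolding paths_from_def by auto
  have "is_path (V, E) (drop r ys)" "length (drop r ys) = Suc p"
    using is_path_drop[OF P(1), of r] P(2) by simp_all
  then obtain k where k: "0 < k" "k < p" "degree (V, E) (drop r ys ! k) \<ge> 3"
    by (rule path_has_branch_vertex)
  define i where "i = r + k"
  have i: "r < i" "i < r + p" "degree (V, E) (ys ! i) \<ge> 3"
    using k P(2) unfolding i_def by simp_all
  have "card {ys ! (i - 1), ys ! Suc i} < degree (V, E) (ys ! i)"
    using i(3) card_insert_le[of "{ys ! Suc i}" "ys ! (i - 1)"] by (simp add: card_insert_if)
  then obtain y where "{ys ! i, y} \<in> E" "y \<noteq> ys ! (i - 1)" "y \<noteq> ys ! Suc i"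
    using neighbour_avoiding by blast
  then obtain ys' where ys': "ys' \<in> paths_from c (r + p)" "take (Suc i) ys' = take (Suc i) ys" "ys' \<noteq> ys"
    using paths_from_reroute[OF ys(1) assms(2)] i(1,2) by (metis gr0I not_less0)
  have "take (Suc r) ys' = take (Suc r) (take (Suc i) ys')"
    using i(1) by simp
  also have "\<dots> = xs"
    using ys'(2) ys(2) i(1) by simp
  finally have "take (Suc r) ys' = xs" .
  then have "{ys, ys'} \<subseteq> {ys \<in> paths_from c (r + p). take (Suc r) ys = xs}"
    using ys ys'(1) by auto
  moreover have "finite {ys \<in> paths_from c (r + p). take (Suc r) ys = xs}"
    using finite_paths_from by simp
  moreover have "card {ys, ys'} = 2"
    using ys'(3) by simp
  ultimately show ?thesis
    by (metis card_mono)
qed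

lemma card_paths_from_mono:
  assumes "c \<in> V" "a \<le> b" "b < g"
  shows "card (paths_from c a) \<le> card (paths_from c b)"
proof (rule surj_card_le[OF finite_paths_from])
  show "paths_from c a \<subseteq> take (Suc a) ` paths_from c b"
  proof
    fix xs assume "xs \<in> paths_from c a"
    then obtain ys where "ys \<in> paths_from c (a + (b - a))" "take (Suc a) ys = xs"
      using paths_from_extend[of xs c a "b - a"] assms by auto
    then show "xs \<in> take (Suc a) ` paths_from c b"
      using assms(2) by auto
  qed
qed

lemma card_paths_from_double:
  assumes "r + p < g"
  shows "2 * card (paths_from c r) \<le> card (paths_from c (r + p))"
proof -
  have "2 * card (paths_from c r) = (\<Sum>xs\<in>paths_from c r. 2)"
    by simp
  also have "\<dots> \<le> (\<Sum>xs\<in>paths_from c r. card {ys \<in> paths_from c (r + p). take (Suc r) ys = xs})"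
    using paths_from_branch assms by (intro sum_mono) blast
  also have "\<dots> = (\<Sum>ys\<in>paths_from c (r + p). 1)"
  proof (rule sum_multicount_gen[OF finite_paths_from finite_paths_from], intro ballI)
    fix ys assume "ys \<in> paths_from c (r + p)"
    then have "{xs \<in> paths_from c r. take (Suc r) ys = xs} = {take (Suc r) ys}"
      using take_paths_from[of ys c "r + p" r] by auto
    then show "card {xs \<in> paths_from c r. take (Suc r) ys = xs} = 1"
      by simp
  qed
  finally show ?thesis by simp
qed

lemma card_paths_from_exp:
  assumes "c \<in> V" "r < g"
  shows "2 ^ (r div p) \<le> card (paths_from c r)"
proof -
  have "2 ^ q \<le> card (paths_from c (q * p))" if "q * p < g" for q
    using that
  proof (induction q)
    case 0
    then show ?case using paths_from_0[OF assms(1)] by simp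
  next
    case (Suc q)
    then have "2 * 2 ^ q \<le> 2 * card (paths_from c (q * p))"
      using p_ge_2 by simp
    also have "\<dots> \<le> card (paths_from c (q * p + p))"
      using card_paths_from_double[of "q * p"] Suc.prems by (simp add: add.commute)
    finally show ?case by (simp add: add.commute)
  qed
  moreover have "r div p * p \<le> r"
    by simp
  ultimately show ?thesis
    using card_paths_from_mono[OF assms(1)] assms(2) by (meson le_less_trans order.trans)
qed

end

section \<open>Clusters around a net\<close>

locale net = fin_graph +
  fixes R :: nat and S :: "'a set"
  assumes centres_in_V: "S \<subseteq> V"
    and separated: "c \<in> S \<Longrightarrow> c' \<in> S \<Longrightarrow> c \<noteq> c' \<Longrightarrow> reach n c c' \<Longrightarrow> 2 * R < n"
    and covering: "v \<in> V \<Longrightarrow> \<exists>c\<in>S. \<exists>n \<le> 2 * R. reach n c v"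
begin

definition rank :: "'a \<Rightarrow> nat" where
  "rank = (SOME f. inj_on f V)"

lemma inj_rank: "inj_on rank V"
  unfolding rank_def using finite_imp_inj_to_nat_seg[OF finite_V] by (metis someI)

definition candidates :: "'a \<Rightarrow> 'a set" where
  "candidates v = {c \<in> S. \<exists>n. reach n c v}"

text \<open>Every vertex joins its nearest centre; ties are broken by \<open>rank\<close>, which makes the
  assignment consistent along shortest paths to the centre.\<close>

definition centre :: "'a \<Rightarrow> 'a" where
  "centre v = arg_min_on (\<lambda>c. (gdist c v, rank c)) (candidates v)"

definition depth :: "'a \<Rightarrow> nat" where
  "depth v = gdist (centre v) v"

definition parent :: "'a \<Rightarrow> 'a" where
  "parent v = (SOME u. {u, v} \<in> E \<and> reach (depth v - 1) (centre v) u \<and> gdist (centre v) u = depth v - 1)"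

definition cluster :: "'a \<Rightarrow> 'a set" where
  "cluster c = {v \<in> V. centre v = c}"

definition tree_edges :: "'a \<Rightarrow> 'a set set" where
  "tree_edges c = {{v, parent v} | v. v \<in> cluster c \<and> v \<noteq> c}"

lemma centre_minimal:
  assumes "v \<in> V"
  shows "centre v \<in> candidates v"
    and "c \<in> candidates v \<Longrightarrow> (gdist (centre v) v, rank (centre v)) \<le> (gdist c v, rank c)"
proof -
  have fin: "finite (candidates v)"
    using finite_subset[OF centres_in_V finite_V] unfolding candidates_def by auto
  moreover have ne: "candidates v \<noteq> {}"
    using covering[OF assms] unfolding candidates_def by blast
  ultimately show "centre v \<in> candidates v"
    unfolding centre_def by (rule arg_min_if_finite(1))
  show "c \<in> candidates v \<Longrightarrow> (gdist (centre v) v, rank (centre v)) \<le> (gdist c v, rank c)"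
    unfolding centre_def by (rule arg_min_least[OF fin ne])
qed

lemma centre_eqI:
  assumes "v \<in> V" "c \<in> candidates v" "\<And>c'. c' \<in> candidates v \<Longrightarrow> (gdist c v, rank c) \<le> (gdist c' v, rank c')"
  shows "centre v = c"
proof -
  have "(gdist (centre v) v, rank (centre v)) = (gdist c v, rank c)"
    using centre_minimal[OF assms(1)] assms(2,3) by (meson order.antisym)
  then show ?thesis
    using inj_rank centre_minimal(1)[OF assms(1)] assms(2) centres_in_V
    unfolding candidates_def by (auto dest: inj_onD)
qed

lemma centre_in_S: "v \<in> V \<Longrightarrow> centre v \<in> S"
  and reach_depth: "v \<in> V \<Longrightarrow> reach (depth v) (centre v) v"
  using centre_minimal(1) reach_gdist unfolding candidates_def depth_def by blast+

lemma depth_le: "v \<in> V \<Longrightarrow> depth v \<le> 2 * R"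
proof -
  assume v: "v \<in> V"
  then obtain c n where c: "c \<in> S" "n \<le> 2 * R" "reach n c v"
    using covering by blast
  then have "(depth v, rank (centre v)) \<le> (gdist c v, rank c)"
    using centre_minimal(2)[OF v] unfolding candidates_def depth_def by blast
  then show ?thesis
    using gdist_le[OF c(3)] c(2) by (auto simp: less_eq_prod_def)
qed

lemma centre_ball:
  assumes c: "c \<in> S" and "reach n c v" "n \<le> R"
  shows "centre v = c"
proof (rule centre_eqI)
  show v: "v \<in> V" "c \<in> candidates v"
    using assms reach_vertices unfolding candidates_def by blast+
  fix c' assume c': "c' \<in> candidates v"
  show "(gdist c v, rank c) \<le> (gdist c' v, rank c')"
  proof (cases "c' = c")
    case False
    have "reach (gdist c' v + n) c' c"
      using c' reach_trans[OF reach_gdist reach_sym[OF assms(2)]] unfolding candidates_def by blast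
    then have "2 * R < gdist c' v + n"
      using separated c c' False unfolding candidates_def by blast
    then show ?thesis
      using gdist_le[OF assms(2)] assms(3) by (simp add: less_eq_prod_def)
  qed simp
qed

lemma centre_of_centre: "c \<in> S \<Longrightarrow> centre c = c"
  using centre_ball[OF _ reach_0] centres_in_V by blast

lemma depth_of_centre: "c \<in> S \<Longrightarrow> depth c = 0"
  unfolding depth_def using centre_of_centre gdist_le[OF reach_0] centres_in_V by fastforce

lemma depth_0_iff: "v \<in> V \<Longrightarrow> depth v = 0 \<longleftrightarrow> v \<in> S"
  using reach_depth reach_0D depth_of_centre centre_in_S by fastforce

lemma parent_step:
  assumes v: "v \<in> V" and "depth v > 0"
  shows "{parent v, v} \<in> E" "parent v \<in> V" "centre (parent v) = centre v" "depth (parent v) = depth v - 1"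
proof -
  let ?c = "centre v"
  have "\<exists>u. {u, v} \<in> E \<and> reach (depth v - 1) ?c u \<and> gdist ?c u = depth v - 1"
    using gdist_predecessor[OF reach_depth[OF v]] assms(2) unfolding depth_def
    by (metis insert_commute)
  from someI_ex[OF this]
  have u: "{parent v, v} \<in> E" "reach (depth v - 1) ?c (parent v)" "gdist ?c (parent v) = depth v - 1"
    unfolding parent_def[symmetric] by blast+
  then show "{parent v, v} \<in> E" "parent v \<in> V"
    using edge_vertices by blast+
  show centre_parent: "centre (parent v) = ?c"
  proof (rule centre_eqI)
    show "parent v \<in> V" "?c \<in> candidates (parent v)"
      using u(1,2) edge_vertices centre_in_S[OF v] unfolding candidates_def by blast+
    fix c' assume c': "c' \<in> candidates (parent v)"
    then have "reach (Suc (gdist c' (parent v))) c' v"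
      using reach_gdist reach_Suc_iff u(1) unfolding candidates_def by blast
    then have "c' \<in> candidates v" "gdist c' v \<le> Suc (gdist c' (parent v))"
      using c' gdist_le unfolding candidates_def by blast+
    moreover have "gdist ?c v = Suc (gdist ?c (parent v))"
      using u(3) assms(2) unfolding depth_def by simp
    ultimately show "(gdist ?c (parent v), rank ?c) \<le> (gdist c' (parent v), rank c')"
      using centre_minimal(2)[OF v, of c'] by (auto simp: less_eq_prod_def)
  qed
  show "depth (parent v) = depth v - 1"
    using u(3) centre_parent unfolding depth_def by simp
qed

lemma iterated_parent:
  assumes "v \<in> V" "k \<le> depth v"
  shows "(parent ^^ k) v \<in> V \<and> centre ((parent ^^ k) v) = centre v \<and> depth ((parent ^^ k) v) = depth v - k"
  using assms(2)
proof (induction k)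
  case (Suc k)
  then show ?case
    using parent_step[of "(parent ^^ k) v"] by simp
qed (use assms(1) in simp)

definition chain :: "'a \<Rightarrow> 'a list" where
  "chain v = map (\<lambda>k. (parent ^^ k) v) [0..<Suc (depth v)]"

lemma chain_simps:
  "length (chain v) = Suc (depth v)" "chain v \<noteq> []" "hd (chain v) = v"
  "k \<le> depth v \<Longrightarrow> chain v ! k = (parent ^^ k) v"
  unfolding chain_def by (simp_all add: hd_map del: upt_Suc)

lemma last_chain: "v \<in> V \<Longrightarrow> last (chain v) = centre v"
  using iterated_parent[of v "depth v"] chain_simps depth_0_iff centre_of_centre
  by (metis diff_self_eq_0 last_conv_nth le_refl diff_Suc_1 centre_in_S)

lemma chain_in_cluster: "v \<in> V \<Longrightarrow> set (chain v) \<subseteq> cluster (centre v)"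
  using iterated_parent unfolding chain_def cluster_def by auto

lemma distinct_chain: "v \<in> V \<Longrightarrow> distinct (chain v)"
  unfolding distinct_conv_nth chain_simps using iterated_parent chain_simps(4) by (metis le_simps(2) diff_diff_cancel)

lemma tree_edge:
  assumes "e \<in> tree_edges c"
  obtains w where "e = {w, parent w}" "w \<in> cluster c" "parent w \<in> cluster c" "{parent w, w} \<in> E"
    "depth w > 0" "depth (parent w) = depth w - 1"
proof -
  obtain w where w: "e = {w, parent w}" "w \<in> cluster c" "w \<noteq> c"
    using assms unfolding tree_edges_def by blast
  then have "w \<in> V" "depth w \<noteq> 0"
    using depth_0_iff centre_of_centre unfolding cluster_def by auto
  with w that parent_step[of w] show ?thesis
    unfolding cluster_def by simp
qed

lemma tree_edges_subset: "tree_edges c \<subseteq> E"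
  using tree_edge by (metis insert_commute subsetI)

lemma walk_chain: "v \<in> V \<Longrightarrow> walk (tree_edges (centre v)) (chain v)"
  unfolding walk_nth
proof (intro allI impI)
  fix i assume v: "v \<in> V" and i: "Suc i < length (chain v)"
  let ?w = "(parent ^^ i) v"
  have "?w \<in> cluster (centre v)" "depth ?w > 0"
    using iterated_parent[OF v, of i] i chain_simps unfolding cluster_def by auto
  then have "?w \<noteq> centre v"
    using depth_of_centre centre_in_S[OF v] by auto
  then have "{?w, parent ?w} \<in> tree_edges (centre v)"
    unfolding tree_edges_def using \<open>?w \<in> cluster (centre v)\<close> by blast
  then show "{chain v ! i, chain v ! Suc i} \<in> tree_edges (centre v)"
    using i chain_simps by simp
qed

lemma wf_cluster_tree: "wf_graph (cluster c, tree_edges c)"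
  unfolding wf_graph_def
proof (intro conjI ballI)
  show "finite (fst (cluster c, tree_edges c))"
    using finite_V unfolding cluster_def by simp
  fix e assume "e \<in> snd (cluster c, tree_edges c)"
  then have "e \<in> tree_edges c" by simp
  then obtain w where "e = {w, parent w}" "w \<in> cluster c" "parent w \<in> cluster c" "{parent w, w} \<in> E"
    "depth w > 0" "depth (parent w) = depth w - 1"
    by (rule tree_edge)
  then show "\<exists>x y. x \<in> fst (cluster c, tree_edges c) \<and> y \<in> fst (cluster c, tree_edges c) \<and> x \<noteq> y \<and> e = {x, y}"
    using edge_neq by auto
qed

lemma tree_walk:
  assumes "x \<in> cluster c" "y \<in> cluster c"
  defines "w \<equiv> chain x @ tl (rev (chain y))"
  shows "walk (tree_edges c) w" "w \<noteq> []" "hd w = x" "last w = y" "set w \<subseteq> cluster c" "length w \<le> 4 * R + 1"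
proof -
  have xy: "x \<in> V" "y \<in> V" "centre x = c" "centre y = c"
    using assms(1,2) unfolding cluster_def by auto
  then have join: "last (chain x) = hd (rev (chain y))"
    using last_chain by (simp add: hd_rev)
  have "walk (tree_edges c) (chain x)" "walk (tree_edges c) (rev (chain y))"
    using walk_chain[of x] walk_chain[of y] xy by simp_all
  then show "walk (tree_edges c) w"
    unfolding w_def using join by (rule walk_join)
  show "last w = y"
    using last_append_tl[OF _ chain_simps(2) join] chain_simps unfolding w_def by (simp add: last_rev)
  show "w \<noteq> []" "hd w = x"
    unfolding w_def using chain_simps by simp_all
  have "set (tl (rev (chain y))) \<subseteq> set (chain y)"
    by (metis list.set_sel(2) set_rev subsetI tl_Nil)
  then show "set w \<subseteq> cluster c"
    using chain_in_cluster[of x] chain_in_cluster[of y] xy unfolding w_def by auto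
  have "length (chain x) \<le> 2 * R + 1" "length (chain y) \<le> 2 * R + 1"
    using depth_le xy chain_simps(1) by simp_all
  then show "length w \<le> 4 * R + 1"
    unfolding w_def by simp
qed

lemma cluster_connected: "connected_graph (cluster c, tree_edges c)"
  unfolding connected_graph_def
proof (intro ballI)
  fix x y assume "x \<in> fst (cluster c, tree_edges c)" "y \<in> fst (cluster c, tree_edges c)"
  define w where "w = chain x @ tl (rev (chain y))"
  have w: "walk (tree_edges c) w" "w \<noteq> []" "hd w = x" "last w = y" "set w \<subseteq> cluster c"
    using tree_walk \<open>x \<in> _\<close> \<open>y \<in> _\<close> unfolding w_def by simp_all
  obtain xs where "walk (tree_edges c) xs" "distinct xs" "xs \<noteq> []" "hd xs = hd w" "last xs = last w"
    "set xs \<subseteq> set w" "length xs \<le> length w"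
    by (rule walk_shortcut[OF w(1,2)])
  with w show "\<exists>xs. is_path (cluster c, tree_edges c) xs \<and> hd xs = x \<and> last xs = y"
    unfolding is_path_iff_walk by auto
qed

text \<open>Along a tree edge the depth drops by one towards the parent; at a vertex of maximal depth
  on a cycle both cycle neighbours would have to be its parent.\<close>

lemma tree_edge_towards_parent:
  assumes "{x, y} \<in> tree_edges c" "depth y \<le> depth x"
  shows "y = parent x"
proof -
  obtain w where w: "{x, y} = {w, parent w}" "depth w > 0" "depth (parent w) = depth w - 1"
    using tree_edge[OF assms(1)] by metis
  then consider "x = w" "y = parent w" | "x = parent w" "y = w"
    by (auto simp: doubleton_eq_iff)
  then show ?thesis
    by cases (use w assms(2) in auto)
qed

lemma cluster_acyclic: "\<not> is_cycle (cluster c, tree_edges c) cyc"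
proof
  assume cyc: "is_cycle (cluster c, tree_edges c) cyc"
  then have "set cyc \<noteq> {}"
    unfolding is_cycle_def is_path_def by auto
  then have "Max (depth ` set cyc) \<in> depth ` set cyc"
    by (intro Max_in) simp_all
  then obtain x where x: "x \<in> set cyc" "depth x = Max (depth ` set cyc)"
    by (metis imageE)
  then have deepest: "depth z \<le> depth x" if "z \<in> set cyc" for z
    using that by simp
  obtain a b where "a \<noteq> b" "a \<in> set cyc" "b \<in> set cyc" "{x, a} \<in> tree_edges c" "{x, b} \<in> tree_edges c"
    using cycle_two_neighbours[OF cyc x(1)] by auto
  then show False
    using tree_edge_towards_parent[of x a c] tree_edge_towards_parent[of x b c] deepest by simp
qed

lemma path_to_centre_in_cluster:
  assumes "v \<in> cluster c"
  shows "is_path (cluster c, tree_edges c) (rev (chain v))"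
  using assms chain_in_cluster walk_chain distinct_chain chain_simps
  unfolding is_path_iff_walk cluster_def by auto

lemma cluster_radius:
  assumes c: "c \<in> S" and P: "is_path (cluster c, tree_edges c) P" "hd P = c"
  shows "length P \<le> 2 * R + 1"
proof -
  have "P \<noteq> []" "last P \<in> cluster c"
    using P(1) unfolding is_path_def by auto
  then have Q: "is_path (cluster c, tree_edges c) (rev (chain (last P)))"
    "hd (rev (chain (last P))) = c" "last (rev (chain (last P))) = last P"
    using path_to_centre_in_cluster last_chain chain_simps unfolding cluster_def by (auto simp: hd_rev last_rev)
  then have "P = rev (chain (last P))"
    using cycle_of_distinct_paths[OF P(1) Q(1)] P(2) cluster_acyclic by metis
  then show ?thesis
    using depth_le \<open>last P \<in> cluster c\<close> chain_simps unfolding cluster_def by (metis length_rev mem_Collect_eq add_le_mono1 Suc_eq_plus1)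
qed

lemma cluster_tree: "c \<in> S \<Longrightarrow> is_tree (cluster c, tree_edges c)"
  unfolding is_tree_def using cluster_connected cluster_acyclic centre_of_centre centres_in_V
  unfolding cluster_def by auto

definition cross_edges :: "'a set set" where
  "cross_edges = {{a, b} | a b. {a, b} \<in> E \<and> centre a \<noteq> centre b}"

definition quotient_edges :: "'a set set" where
  "quotient_edges = (\<lambda>e. centre ` e) ` cross_edges"

lemma wf_graph_quotient: "wf_graph (S, quotient_edges)"
  unfolding wf_graph_def
proof (intro conjI ballI)
  show "finite (fst (S, quotient_edges))"
    using finite_subset[OF centres_in_V finite_V] by simp
  fix h assume "h \<in> snd (S, quotient_edges)"
  then obtain a b where ab: "{a, b} \<in> E" "centre a \<noteq> centre b" "h = {centre a, centre b}"
    unfolding quotient_edges_def cross_edges_def by auto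
  moreover have "centre a \<in> S" "centre b \<in> S"
    using edge_vertices[OF ab(1)] centre_in_S by simp_all
  ultimately show "\<exists>x y. x \<in> fst (S, quotient_edges) \<and> y \<in> fst (S, quotient_edges) \<and> x \<noteq> y \<and> h = {x, y}"
    by auto
qed

lemma cross_edge_tree_path:
  assumes "{x, y} \<in> E" "centre x \<noteq> centre y"
  defines "xs \<equiv> rev (chain x) @ chain y"
  shows "is_path (cluster (centre x) \<union> cluster (centre y),
      tree_edges (centre x) \<union> tree_edges (centre y) \<union> {{x, y}}) xs"
    and "hd xs = centre x" "last xs = centre y" "length xs - 1 \<le> 4 * R + 1"
proof -
  have xy: "x \<in> V" "y \<in> V"
    using edge_vertices assms(1) by auto
  let ?F = "tree_edges (centre x) \<union> tree_edges (centre y) \<union> {{x, y}}"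
  have "walk ?F xs"
    unfolding xs_def walk_append
    using walk_mono[OF walk_chain[OF xy(1)], of ?F] walk_mono[OF walk_chain[OF xy(2)], of ?F] chain_simps
    by (auto simp: last_rev)
  moreover have "distinct xs" "set xs \<subseteq> cluster (centre x) \<union> cluster (centre y)"
    unfolding xs_def using distinct_chain[of x] distinct_chain[of y] chain_in_cluster[of x]
      chain_in_cluster[of y] xy assms(2) by (auto simp: cluster_def subset_iff)
  ultimately show "is_path (cluster (centre x) \<union> cluster (centre y), ?F) xs"
    unfolding is_path_iff_walk xs_def using chain_simps(2) by simp
  show "hd xs = centre x" "last xs = centre y"
    unfolding xs_def using last_chain xy chain_simps by (simp_all add: hd_rev)
  show "length xs - 1 \<le> 4 * R + 1"
    unfolding xs_def using depth_le[OF xy(1)] depth_le[OF xy(2)] chain_simps by simp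
qed

text \<open>Contracting the clusters yields a shallow minor at depth \<open>2R\<close>: the clusters are trees of
  radius at most \<open>2R\<close>, so adjacent centres are joined by a path of length at most \<open>4R + 1\<close>.\<close>

lemma shallow_minor_quotient:
  assumes "V \<subseteq> fst G" "E \<subseteq> snd G"
  shows "shallow_minor (4 * R) G (S, quotient_edges)"
  unfolding shallow_minor_def
proof (intro conjI exI[of _ "\<lambda>c. (cluster c, tree_edges c)"] ballI allI impI)
  show "wf_graph (S, quotient_edges)"
    by (rule wf_graph_quotient)
  show "fst (S, quotient_edges) \<subseteq> fst G"
    using centres_in_V assms by simp
  fix c assume c: "c \<in> fst (S, quotient_edges)"
  show "subgraph (cluster c, tree_edges c) G"
    unfolding subgraph_def using wf_cluster_tree tree_edges_subset[of c] assms
    by (auto simp: cluster_def)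
  show "is_tree (cluster c, tree_edges c)" "c \<in> fst (cluster c, tree_edges c)"
    using c cluster_tree centres_in_V centre_of_centre unfolding cluster_def by auto
  fix xs assume "is_path (cluster c, tree_edges c) xs \<and> hd xs = c"
  then show "length xs - 1 \<le> (4 * R + 1) div 2"
    using cluster_radius \<open>c \<in> fst (S, quotient_edges)\<close> by fastforce
next
  fix u v assume "u \<in> fst (S, quotient_edges)" "v \<in> fst (S, quotient_edges)" "u \<noteq> v"
  then show "fst (cluster u, tree_edges u) \<inter> fst (cluster v, tree_edges v) = {}"
    unfolding cluster_def by auto
next
  fix u v assume "{u, v} \<in> snd (S, quotient_edges)"
  then obtain x y where xy: "{x, y} \<in> E" "centre x = u" "centre y = v" "u \<noteq> v"
    unfolding quotient_edges_def cross_edges_def by (auto simp: doubleton_eq_iff) (metis insert_commute)+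
  then have "x \<in> fst (cluster u, tree_edges u)" "y \<in> fst (cluster v, tree_edges v)"
    using edge_vertices unfolding cluster_def by auto
  then show "\<exists>x y. x \<in> fst (cluster u, tree_edges u) \<and> y \<in> fst (cluster v, tree_edges v) \<and> {x, y} \<in> snd G \<and>
      (\<exists>xs. is_path (fst (cluster u, tree_edges u) \<union> fst (cluster v, tree_edges v),
          snd (cluster u, tree_edges u) \<union> snd (cluster v, tree_edges v) \<union> {{x, y}}) xs \<and>
        hd xs = u \<and> last xs = v \<and> length xs - 1 \<le> 4 * R + 1)"
    using cross_edge_tree_path[OF xy(1)] xy assms(2) by fastforce
qed

end

context fin_graph
begin

text \<open>A maximal \<open>2R\<close>-separated set of centres is \<open>2R\<close>-covering.\<close>

lemma net_exists: "\<exists>S. net V E R S"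
proof -
  define sep where "sep S \<longleftrightarrow> S \<subseteq> V \<and> (\<forall>c\<in>S. \<forall>c'\<in>S. \<forall>n. c \<noteq> c' \<and> reach n c c' \<longrightarrow> 2 * R < n)" for S
  have fin: "finite (card ` {S. sep S})"
    using finite_V unfolding sep_def by simp
  moreover have "sep {}"
    unfolding sep_def by simp
  ultimately have "Max (card ` {S. sep S}) \<in> card ` {S. sep S}"
    by (intro Max_in) auto
  then obtain S where S: "sep S" and S_max: "\<And>T. sep T \<Longrightarrow> card T \<le> card S"
    using Max_ge[OF fin] by auto
  have "\<exists>c\<in>S. \<exists>n \<le> 2 * R. reach n c v" if v: "v \<in> V" for v
  proof (rule ccontr)
    assume far: "\<not> ?thesis"
    then have "v \<notin> S"
      using reach_0[OF v] by auto
    moreover have "sep (insert v S)"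
      using S v far reach_sym unfolding sep_def by (auto simp: not_le) (meson not_le)+
    ultimately show False
      using S_max[of "insert v S"] finite_subset[OF _ finite_V] S unfolding sep_def by simp
  qed
  with S have "net V E R S"
    unfolding sep_def by (intro net.intro fin_graph_axioms) (auto simp: net_axioms_def)
  then show ?thesis ..
qed

end

locale irreducible_net = irreducible_graph V E p g + net V E R S
  for V :: "'a set" and E p g R S +
  assumes girth_large: "8 * R + 3 \<le> g"
begin

text \<open>Two edges between the same pair of clusters close up, through the two cluster trees,
  to a cycle of length at most \<open>8R + 2\<close>.\<close>

lemma cross_edge_unique:
  assumes e1: "{x1, y1} \<in> E" and e2: "{x2, y2} \<in> E"
    and "centre x1 = centre x2" "centre y1 = centre y2" "centre x1 \<noteq> centre y1"
  shows "{x1, y1} = {x2, y2}"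
proof (rule ccontr)
  assume ne: "{x1, y1} \<noteq> {x2, y2}"
  let ?u = "centre x1" and ?v = "centre y1"
  have X: "x1 \<in> cluster ?u" "x2 \<in> cluster ?u" "y1 \<in> cluster ?v" "y2 \<in> cluster ?v"
    using edge_vertices e1 e2 assms(3,4) unfolding cluster_def by auto
  define A where "A = chain x1 @ tl (rev (chain x2))"
  define B where "B = chain y2 @ tl (rev (chain y1))"
  note tA = tree_walk[OF X(1,2), folded A_def] and tB = tree_walk[OF X(4,3), folded B_def]
  let ?F = "E - {{x1, y1}}"
  have "tree_edges ?u \<subseteq> ?F" "tree_edges ?v \<subseteq> ?F"
    using tree_edges_subset tree_edge X assms(5) unfolding cluster_def
    by (auto simp: doubleton_eq_iff) (metis doubleton_eq_iff mem_Collect_eq)+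
  then have "walk ?F (A @ B)"
    unfolding walk_append using walk_mono[OF tA(1)] walk_mono[OF tB(1)] tA(4) tB(3) e2 ne by auto
  moreover have "A @ B \<noteq> []" "hd (A @ B) = x1" "last (A @ B) = y1" "set (A @ B) \<subseteq> V"
    using tA tB unfolding cluster_def by auto
  ultimately obtain cyc where "is_cycle (V, E) cyc" "length cyc \<le> length (A @ B)"
    using cycle_of_walk_avoiding_edge[of x1 y1 "(V, E)" "A @ B"] edge_neq[OF e1] e1 by auto
  then show False
    using girth_ge[of cyc] tA(6) tB(6) girth_large by simp
qed

lemma card_quotient_edges: "card quotient_edges = card cross_edges"
  unfolding quotient_edges_def
proof (rule card_image, rule inj_onI)
  fix e e' assume "e \<in> cross_edges" "e' \<in> cross_edges" "centre ` e = centre ` e'"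
  then obtain a b a' b' where "e = {a, b}" "e' = {a', b'}" "{a, b} \<in> E" "{a', b'} \<in> E"
    "centre a \<noteq> centre b" "{centre a, centre b} = {centre a', centre b'}"
    unfolding cross_edges_def by auto
  then show "e = e'"
    using cross_edge_unique[of a b a' b'] cross_edge_unique[of a b b' a']
    by (auto simp: doubleton_eq_iff insert_commute)
qed

definition exits :: "'a \<Rightarrow> 'a set set" where
  "exits c = {e \<in> cross_edges. c \<in> centre ` e}"

lemma sum_card_exits: "(\<Sum>c\<in>S. card (exits c)) = 2 * card cross_edges"
  unfolding exits_def
proof (rule sum_multicount)
  show "finite S"
    using finite_subset[OF centres_in_V finite_V] .
  show "finite cross_edges"
    by (rule finite_subset[OF _ finite_E]) (auto simp: cross_edges_def)
  show "\<forall>e\<in>cross_edges. card {c \<in> S. c \<in> centre ` e} = 2"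
  proof
    fix e assume "e \<in> cross_edges"
    then obtain a b where "e = {a, b}" "{a, b} \<in> E" "centre a \<noteq> centre b"
      unfolding cross_edges_def by auto
    moreover have "centre a \<in> S" "centre b \<in> S"
      using edge_vertices centre_in_S calculation(2) by blast+
    ultimately have "{c \<in> S. c \<in> centre ` e} = {centre a, centre b}"
      by auto
    then show "card {c \<in> S. c \<in> centre ` e} = 2"
      using \<open>centre a \<noteq> centre b\<close> by simp
  qed
qed

lemma prefix_in_cluster:
  assumes "c \<in> S" "P \<in> paths_from c r" "j < length P" "j \<le> R"
  shows "P ! j \<in> cluster c"
proof -
  have "take (Suc j) P \<in> paths_from c j"
    using take_paths_from assms(2-3) unfolding paths_from_def by simp
  then have "reach j c (P ! j)"
    using path_reach assms(3) unfolding paths_from_def by (fastforce simp: take_Suc_conv_app_nth)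
  then show ?thesis
    using centre_ball[OF assms(1) _ assms(4)] reach_vertices unfolding cluster_def by blast
qed

text \<open>A vertex of the cluster is joined to the centre by a path of length at most \<open>2R\<close>, so a
  second path of length \<open>2R + 1\<close> would close a cycle shorter than the girth.\<close>

lemma long_path_ends_outside_cluster:
  assumes P: "P \<in> paths_from c (2 * R + 1)"
  shows "P ! (2 * R + 1) \<notin> cluster c"
proof
  assume "P ! (2 * R + 1) \<in> cluster c"
  moreover have Pp: "is_path (V, E) P" "hd P = c" "length P = 2 * R + 2"
    using P unfolding paths_from_def by auto
  moreover have "last P = P ! (2 * R + 1)"
    using Pp(3) last_conv_nth[of P] by (cases P) auto
  ultimately have "last P \<in> V" "centre (last P) = c"
    unfolding cluster_def by auto
  obtain Q where Q: "is_path (V, E) Q" "hd Q = c" "last Q = last P" "length Q \<le> Suc (depth (last P))"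
    by (rule reach_path[OF reach_depth[OF \<open>last P \<in> V\<close>], unfolded \<open>centre (last P) = c\<close>])
  then have "length Q \<le> 2 * R + 1"
    using depth_le[OF \<open>last P \<in> V\<close>] by simp
  then have "P \<noteq> Q"
    using Pp(3) by auto
  moreover have "hd P = hd Q" "last P = last Q"
    using Pp(2) Q(2,3) by simp_all
  ultimately obtain cyc where "is_cycle (V, E) cyc" "length cyc + 2 \<le> length P + length Q"
    using cycle_of_distinct_paths[OF Pp(1) Q(1)] by blast
  then show False
    using girth_ge[of cyc] Pp(3) \<open>length Q \<le> 2 * R + 1\<close> girth_large by linarith
qed

lemma path_leaves_cluster:
  assumes c: "c \<in> S" and P: "P \<in> paths_from c (2 * R + 1)"
  obtains i where "R < i" "i \<le> 2 * R + 1" "P ! (i - 1) \<in> cluster c" "P ! i \<notin> cluster c"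
proof -
  note out = long_path_ends_outside_cluster[OF P]
  define i where "i = (LEAST i. P ! i \<notin> cluster c)"
  have i: "P ! i \<notin> cluster c" "i \<le> 2 * R + 1"
    unfolding i_def using LeastI[of "\<lambda>j. P ! j \<notin> cluster c", OF out]
      Least_le[of "\<lambda>j. P ! j \<notin> cluster c", OF out] by simp_all
  have "R < i"
  proof (rule ccontr)
    assume "\<not> R < i"
    then have "P ! i \<in> cluster c"
      using prefix_in_cluster[OF c P, of i] P unfolding paths_from_def by simp
    with i(1) show False by simp
  qed
  moreover have "P ! (i - 1) \<in> cluster c"
    using not_less_Least[of "i - 1" "\<lambda>j. P ! j \<notin> cluster c"] \<open>R < i\<close> unfolding i_def[symmetric] by simp
  ultimately show ?thesis
    using that i by blast
qed

text \<open>An exit edge of a path leaving the cluster determines the path up to that edge, since a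
  second path from the centre to the same vertex would close a short cycle.\<close>

lemma exit_determines_prefix:
  assumes "P \<in> paths_from c (2 * R + 1)" "P' \<in> paths_from c (2 * R + 1)"
    and "R < i" "i \<le> 2 * R + 1" "R < i'" "i' \<le> 2 * R + 1" "P ! i = P' ! i'"
  shows "take (R + 2) P = take (R + 2) P'"
proof -
  have A: "take (Suc i) P \<in> paths_from c i" "take (Suc i') P' \<in> paths_from c i'"
    using take_paths_from[OF assms(1), of i] take_paths_from[OF assms(2), of i'] assms(4,6) by simp_all
  have ends: "last (take (Suc i) P) = last (take (Suc i') P')" "hd (take (Suc i) P) = hd (take (Suc i') P')"
    using assms A unfolding paths_from_def by (simp_all add: take_Suc_conv_app_nth)
  have short: "length (take (Suc i) P) + length (take (Suc i') P') \<le> 4 * R + 4"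
    using assms(4,6) A unfolding paths_from_def by simp
  have "take (Suc i) P = take (Suc i') P'"
  proof (rule ccontr)
    assume "take (Suc i) P \<noteq> take (Suc i') P'"
    then obtain cyc where "is_cycle (V, E) cyc"
      "length cyc + 2 \<le> length (take (Suc i) P) + length (take (Suc i') P')"
      using cycle_of_distinct_paths A ends unfolding paths_from_def by blast
    then show False
      using girth_ge[of cyc] girth_large short by linarith
  qed
  then have "take (R + 2) (take (Suc i) P) = take (R + 2) (take (Suc i') P')"
    by simp
  then show ?thesis
    using assms(3,5) by (simp add: min_def)
qed

definition leaves_through :: "'a \<Rightarrow> 'a list \<Rightarrow> 'a set \<Rightarrow> bool" where
  "leaves_through c Q e \<longleftrightarrow> (\<exists>P i. P \<in> paths_from c (2 * R + 1) \<and> take (R + 2) P = Q \<and>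
    R < i \<and> i \<le> 2 * R + 1 \<and> P ! (i - 1) \<in> cluster c \<and> P ! i \<notin> cluster c \<and> e = {P ! (i - 1), P ! i})"

lemma leaves_through_exists:
  assumes c: "c \<in> S" and Q: "Q \<in> paths_from c (R + 1)"
  obtains e where "e \<in> exits c" "leaves_through c Q e"
proof -
  obtain P where P: "P \<in> paths_from c (R + 1 + R)" "take (Suc (R + 1)) P = Q"
    using paths_from_extend[OF Q, of R] girth_large by auto
  then have P': "P \<in> paths_from c (2 * R + 1)"
    by (simp add: mult_2)
  obtain i where i: "R < i" "i \<le> 2 * R + 1" "P ! (i - 1) \<in> cluster c" "P ! i \<notin> cluster c"
    using path_leaves_cluster[OF c P'] .
  have "\<forall>j. Suc j < length P \<longrightarrow> {P ! j, P ! Suc j} \<in> E" "length P = 2 * R + 2"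
    using P' unfolding paths_from_def is_path_def by simp_all
  moreover obtain k where "i = Suc k"
    using i(1) by (cases i) auto
  ultimately have "{P ! (i - 1), P ! i} \<in> E"
    using i(2) by simp
  moreover have "P ! i \<in> V"
    using P' i(2) unfolding paths_from_def is_path_def by auto
  moreover have "centre (P ! (i - 1)) = c" "centre (P ! i) \<noteq> c"
    using i(3,4) \<open>P ! i \<in> V\<close> unfolding cluster_def by auto
  ultimately have "{P ! (i - 1), P ! i} \<in> exits c"
    unfolding exits_def cross_edges_def by force
  moreover have "leaves_through c Q {P ! (i - 1), P ! i}"
    unfolding leaves_through_def using P' P(2) i by auto
  ultimately show ?thesis
    using that by blast
qed

lemma leaves_through_unique:
  assumes "leaves_through c Q e" "leaves_through c Q' e"
  shows "Q = Q'"
proof -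
  obtain P i where P: "P \<in> paths_from c (2 * R + 1)" "Q = take (R + 2) P" "R < i" "i \<le> 2 * R + 1"
    "P ! i \<notin> cluster c" "e = {P ! (i - 1), P ! i}"
    using assms(1) unfolding leaves_through_def by blast
  obtain P' i' where P': "P' \<in> paths_from c (2 * R + 1)" "Q' = take (R + 2) P'" "R < i'" "i' \<le> 2 * R + 1"
    "P' ! (i' - 1) \<in> cluster c" "e = {P' ! (i' - 1), P' ! i'}"
    using assms(2) unfolding leaves_through_def by blast
  have "P ! i = P' ! i'"
    using P(5,6) P'(5,6) by (auto simp: doubleton_eq_iff)
  then show "Q = Q'"
    using exit_determines_prefix[OF P(1) P'(1) P(3,4) P'(3,4)] P(2) P'(2) by simp
qed

lemma card_paths_from_le_exits:
  assumes "c \<in> S"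
  shows "card (paths_from c (R + 1)) \<le> card (exits c)"
proof (rule card_le_if_inj_on_rel[where r = "leaves_through c"])
  show "finite (exits c)"
    by (rule finite_subset[OF _ finite_E]) (auto simp: exits_def cross_edges_def)
qed (use assms leaves_through_exists leaves_through_unique in metis)+

lemma card_quotient_edges_ge:
  "card S * 2 ^ ((R + 1) div p) \<le> 2 * card quotient_edges"
proof -
  have "card S * 2 ^ ((R + 1) div p) = (\<Sum>c\<in>S. 2 ^ ((R + 1) div p))"
    by simp
  also have "\<dots> \<le> (\<Sum>c\<in>S. card (exits c))"
  proof (rule sum_mono)
    fix c assume "c \<in> S"
    then have "2 ^ ((R + 1) div p) \<le> card (paths_from c (R + 1))"
      using card_paths_from_exp centres_in_V girth_large by auto
    also have "\<dots> \<le> card (exits c)"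
      using card_paths_from_le_exits[OF \<open>c \<in> S\<close>] .
    finally show "2 ^ ((R + 1) div p) \<le> card (exits c)" .
  qed
  also have "\<dots> = 2 * card quotient_edges"
    using sum_card_exits card_quotient_edges by simp
  finally show ?thesis .
qed

end

section \<open>Dense shallow minors\<close>

lemma is_cycle_induced_subgraph:
  "U \<subseteq> fst G \<Longrightarrow> is_cycle (induced_subgraph G U) cyc \<Longrightarrow> is_cycle G cyc"
  unfolding is_cycle_def is_path_def induced_subgraph_def by auto

lemma nabla_lower_bound:
  assumes "wf_graph G" "shallow_minor k G H" "fst H \<noteq> {}"
  shows "real (card (snd H)) / real (card (fst H)) \<le> nabla k G"
proof -
  have "x \<le> real (card (Pow (fst G)))"
    if x: "x \<in> {real (card (snd H')) / real (card (fst H')) | H'. shallow_minor k G H' \<and> fst H' \<noteq> {}}" for x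
  proof -
    obtain H' where H': "shallow_minor k G H'" "fst H' \<noteq> {}" "x = real (card (snd H')) / real (card (fst H'))"
      using x by blast
    then have wf: "wf_graph H'" and sub: "fst H' \<subseteq> fst G"
      unfolding shallow_minor_def by simp_all
    then have "finite (fst H')"
      by (simp add: wf_graph_def)
    with H'(2) have "card (fst H') \<ge> 1"
      by (simp add: Suc_le_eq card_gt_0_iff)
    have "snd H' \<subseteq> Pow (fst G)"
      using wf sub by (auto simp: wf_graph_def)
    moreover have "finite (Pow (fst G))"
      using assms(1) by (simp add: wf_graph_def)
    ultimately have "card (snd H') \<le> card (Pow (fst G))"
      by (simp add: card_mono)
    moreover have "x \<le> real (card (snd H'))"
      using H'(3) \<open>card (fst H') \<ge> 1\<close> by (simp add: divide_le_eq mult_le_cancel_left1)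
    ultimately show ?thesis by simp
  qed
  then have "bdd_above (insert 0 {real (card (snd H')) / real (card (fst H')) | H'. shallow_minor k G H' \<and> fst H' \<noteq> {}})"
    by (intro bdd_aboveI[of _ "real (card (Pow (fst G)))"]) auto
  moreover have "real (card (snd H)) / real (card (fst H))
      \<in> insert 0 {real (card (snd H')) / real (card (fst H')) | H'. shallow_minor k G H' \<and> fst H' \<noteq> {}}"
    using assms(2,3) by blast
  ultimately show ?thesis
    unfolding nabla_def by (rule cSup_upper[rotated])
qed

lemma girth_le_length: "enat g \<le> girth G \<Longrightarrow> is_cycle G cyc \<Longrightarrow> g \<le> length cyc"
proof -
  assume g: "enat g \<le> girth G" and cyc: "is_cycle G cyc"
  then have "girth G = enat (LEAST n. \<exists>xs. is_cycle G xs \<and> length xs = n)"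
    unfolding girth_def by auto
  moreover have "(LEAST n. \<exists>xs. is_cycle G xs \<and> length xs = n) \<le> length cyc"
    using cyc by (intro Least_le) blast
  ultimately show ?thesis
    using g by simp
qed

lemma irreducible_subgraph_dense_minor:
  assumes G: "wf_graph G" and "p \<ge> 2" and U: "U \<subseteq> fst G" "U \<noteq> {}"
    and irr: "p_irreducible p (induced_subgraph G U)"
    and girth: "\<And>cyc. is_cycle G cyc \<Longrightarrow> 8 * R + 3 \<le> length cyc"
  shows "2 ^ ((R + 1) div p) / 2 \<le> nabla (4 * R) G"
proof -
  define F where "F = {e \<in> snd G. e \<subseteq> U}"
  have UF: "induced_subgraph G U = (U, F)"
    unfolding induced_subgraph_def F_def by simp
  have "wf_graph (U, F)"
    using wf_graph_induced_subgraph[OF G U(1)] UF by simp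
  moreover have "8 * R + 3 \<le> length cyc" if "is_cycle (U, F) cyc" for cyc
    using girth is_cycle_induced_subgraph[OF U(1)] that UF by simp
  ultimately interpret irreducible_graph U F p "8 * R + 3"
    using assms(2) irr UF by unfold_locales simp_all
  obtain S where "net U F R S"
    using net_exists by blast
  then interpret irreducible_net U F p "8 * R + 3" R S
    by unfold_locales (auto simp: net_def net_axioms_def)
  have "F \<subseteq> snd G"
    unfolding F_def by blast
  then have minor: "shallow_minor (4 * R) G (S, quotient_edges)"
    by (rule shallow_minor_quotient[OF U(1)])
  obtain u where "u \<in> U"
    using U(2) by blast
  then obtain c where "c \<in> S"
    using covering by blast
  then have "card S > 0"
    using finite_subset[OF centres_in_V finite_V] card_gt_0_iff by blast
  have "card S * 2 ^ ((R + 1) div p) \<le> 2 * card quotient_edges"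
    by (rule card_quotient_edges_ge)
  then have "real (card S * 2 ^ ((R + 1) div p)) \<le> real (2 * card quotient_edges)"
    by (simp only: of_nat_le_iff)
  with \<open>card S > 0\<close> have "2 ^ ((R + 1) div p) / 2 \<le> real (card quotient_edges) / real (card S)"
    by (simp add: field_simps)
  also have "\<dots> \<le> nabla (4 * R) G"
    using nabla_lower_bound[OF G minor] \<open>c \<in> S\<close> by auto
  finally show ?thesis .
qed

lemma powr_less_half_power:
  fixes p R :: nat
  assumes "p \<ge> 2" "4 * p \<le> R"
  shows "2 powr (real R / (4 * real p)) < 2 ^ ((R + 1) div p) / 2"
proof -
  define q where "q = (R + 1) div p"
  have "4 \<le> q"
    using assms div_le_mono[of "4 * p" "R + 1" p] unfolding q_def by simp
  have "R + 1 = q * p + (R + 1) mod p" "(R + 1) mod p < p"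
    using assms(1) unfolding q_def by simp_all
  then have "R + 1 < (q + 1) * p"
    by (simp add: algebra_simps)
  then have "real R + 1 < (real q + 1) * real p"
    by (metis of_nat_1 of_nat_add of_nat_less_iff of_nat_mult)
  then have "real R / (4 * real p) < (real q + 1) / 4"
    using assms(1) by (simp add: field_simps)
  also have "\<dots> \<le> real q - 1"
    using \<open>4 \<le> q\<close> by simp
  finally have "real R / (4 * real p) < real q - 1" .
  then have "2 powr (real R / (4 * real p)) < 2 powr (real q - 1)"
    by simp
  also have "\<dots> = 2 ^ q / 2"
    by (simp add: powr_diff powr_realpow)
  finally show ?thesis
    unfolding q_def .
qed

lemma path_degenerate_if_minors_sparse:
  assumes wf: "wf_graph G" and p: "p \<ge> 2" and girth: "enat (8 * R + 3) \<le> girth G"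
    and sparse: "nabla (4 * R) G < 2 ^ ((R + 1) div p) / 2"
  shows "path_degenerate p G"
proof (rule ccontr)
  assume "\<not> path_degenerate p G"
  then obtain U where "U \<subseteq> fst G" "U \<noteq> {}" "p_irreducible p (induced_subgraph G U)"
    using path_degenerate_or_irreducible_subgraph[OF wf p] by blast
  then have "2 ^ ((R + 1) div p) / 2 \<le> nabla (4 * R) G"
    using irreducible_subgraph_dense_minor[OF wf p] girth_le_length[OF girth] by blast
  with sparse show False by simp
qed

theorem mainTheorem1:
  fixes C :: "'a graph set"
  assumes "\<forall>G\<in>C. wf_graph G"
    and "subexp_expansion C"
  shows "\<forall>p::nat. p \<ge> 2 \<longrightarrow> (\<exists>g::nat. \<forall>G\<in>C. enat g \<le> girth G \<longrightarrow> path_degenerate p G)"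
proof (intro allI impI)
  fix p :: nat assume p: "p \<ge> 2"
  have "1 / (8 * real p) > 0"
    using p by simp
  then obtain N where N: "\<forall>k\<ge>N. \<forall>G\<in>C. nabla k G \<le> 2 powr (1 / (8 * real p) * (real k / 2))"
    using assms(2) unfolding subexp_expansion_def by blast
  define R where "R = N + 4 * p"
  then have "N \<le> 4 * R" "4 * p \<le> R"
    by simp_all
  have "nabla (4 * R) G < 2 ^ ((R + 1) div p) / 2" if "G \<in> C" for G
  proof -
    have "nabla (4 * R) G \<le> 2 powr (1 / (8 * real p) * (real (4 * R) / 2))"
      using N that \<open>N \<le> 4 * R\<close> by blast
    also have "\<dots> = 2 powr (real R / (4 * real p))"
      by (simp add: field_simps)
    also have "\<dots> < 2 ^ ((R + 1) div p) / 2"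
      using powr_less_half_power[OF p \<open>4 * p \<le> R\<close>] .
    finally show ?thesis .
  qed
  then show "\<exists>g. \<forall>G\<in>C. enat g \<le> girth G \<longrightarrow> path_degenerate p G"
    using path_degenerate_if_minors_sparse[OF _ p] assms(1) by blast
qed

end
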